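(* Let $I\subset\mathbb{R}$ be an interval, let $a,c,g:I\to\mathbb{R}$ be given functions and $b_1,b_2,c_1,c_2$ real constants. Suppose $\beta,\gamma,\varepsilon$ are differentiable on $I$ with $$\beta'=c\beta,\qquad \gamma'=a\beta^2,\qquad \varepsilon'=-g\beta.$$ If $u(\xi,\tau),v(\xi,\tau)$ solve the coupled Burgers system $$u_\tau=u_{\xi\xi}-b_1uu_\xi-c_1(uv)_\xi,\qquad v_\tau=v_{\xi\xi}-b_2vv_\xi-c_2(uv)_\xi,$$ then $\psi(x,t)=\beta(t)u(\xi,\tau)$, $\varphi(x,t)=\beta(t)v(\xi,\tau)$, with $\xi=\beta(t)x+\varepsilon(t)$, $\tau=\gamma(t)$, solve $$\psi_t=a(t)\psi_{xx}-b_1a(t)\psi\psi_x-c_1a(t)(\psi\varphi)_x+c(t)(\psi+x\psi_x)-g(t)\psi_x,$$ $$\varphi_t=a(t)\varphi_{xx}-b_2a(t)\varphi\varphi_x-c_2a(t)(\psi\varphi)_x+c(t)(\varphi+x\varphi_x)-g(t)\varphi_x.$$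
   Context: All functions are real-valued; primes denote derivatives with respect to $t$. *)

theory Defs
  imports "HOL-Analysis.Analysis"
begin

end

theory Submission
  imports Defs
begin

text \<open>The substitution \<open>\<xi> = \<beta>(t) x + \<epsilon>(t)\<close>, \<open>\<tau> = \<gamma>(t)\<close> and the amplitude factor \<open>\<beta>(t)\<close>
  turn each \<open>x\<close>-derivative into a factor \<open>\<beta>\<close> and each \<open>\<tau>\<close>-derivative into a factor
  \<open>\<gamma>' = a \<beta>\<^sup>2\<close>. Hence \<open>\<psi>\<^sub>x\<^sub>x\<close> and the nonlinear terms \<open>\<psi> \<psi>\<^sub>x\<close>, \<open>(\<psi> \<phi>)\<^sub>x\<close> all carry the
  factor \<open>\<beta>\<^sup>3\<close>, matching \<open>\<beta> \<gamma>' u\<^sub>\<tau> = a \<beta>\<^sup>3 u\<^sub>\<tau>\<close>, while differentiating \<open>\<beta>\<close> and \<open>\<xi>\<close> in \<open>t\<close>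
  produces exactly the extra terms \<open>c (\<psi> + x \<psi>\<^sub>x) - g \<psi>\<^sub>x\<close>.\<close>

lemma has_real_derivative_compose_partials:
  fixes w :: "real \<Rightarrow> real \<Rightarrow> real"
  assumes w: "((\<lambda>p. w (fst p) (snd p)) has_derivative (\<lambda>h. fst h * A + snd h * B))
                (at (p1 t, p2 t))"
    and p1: "(p1 has_real_derivative d1) (at t within S)"
    and p2: "(p2 has_real_derivative d2) (at t within S)"
  shows "((\<lambda>s. w (p1 s) (p2 s)) has_real_derivative (d1 * A + d2 * B)) (at t within S)"
proof -
  have p: "((\<lambda>s. (p1 s, p2 s)) has_derivative (\<lambda>h. (d1 * h, d2 * h))) (at t within S)"
    using has_derivative_Pair[OF p1[unfolded has_field_derivative_def]
                                 p2[unfolded has_field_derivative_def]] .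
  have "((\<lambda>p. w (fst p) (snd p)) has_derivative (\<lambda>h. fst h * A + snd h * B))
          (at (p1 t, p2 t) within (\<lambda>s. (p1 s, p2 s)) ` S)"
    using has_derivative_at_withinI[OF w] .
  from diff_chain_within[OF p this[simplified]]
  have "((\<lambda>s. w (p1 s) (p2 s)) has_derivative (\<lambda>h. d1 * h * A + d2 * h * B)) (at t within S)"
    by (simp add: o_def)
  then show ?thesis
    unfolding has_field_derivative_def
    by (rule has_derivative_eq_rhs) (simp add: fun_eq_iff algebra_simps)
qed

lemma has_derivative_partial_fst:
  fixes w :: "real \<Rightarrow> real \<Rightarrow> real"
  assumes "((\<lambda>p. w (fst p) (snd p)) has_derivative (\<lambda>h. fst h * A + snd h * B)) (at (\<xi>, \<tau>))"
  shows "((\<lambda>s. w s \<tau>) has_real_derivative A) (at \<xi>)"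
proof -
  have "((\<lambda>s. w (id s) ((\<lambda>_. \<tau>) s)) has_real_derivative 1 * A + 0 * B) (at \<xi>)"
    by (rule has_real_derivative_compose_partials) (use assms in \<open>auto intro: DERIV_ident\<close>)
  then show ?thesis
    by simp
qed

lemma has_real_derivative_scaled_affine_comp:
  assumes "(f has_real_derivative D) (at (k * x + e))"
  shows "((\<lambda>y. m * f (k * y + e)) has_real_derivative m * k * D) (at x)"
proof -
  have "((\<lambda>y. k * y + e) has_real_derivative k) (at x)"
    by (auto intro!: derivative_eq_intros)
  from DERIV_cmult[OF DERIV_chain2[OF assms this], of m] show ?thesis
    by (simp add: ac_simps)
qed

lemma scaled_profile_derivative_time:
  fixes w :: "real \<Rightarrow> real \<Rightarrow> real"
  assumes w: "((\<lambda>p. w (fst p) (snd p)) has_derivative (\<lambda>h. fst h * A + snd h * B))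
                (at (\<beta> t * x + \<epsilon> t, \<gamma> t))"
    and \<beta>: "(\<beta> has_real_derivative \<beta>') (at t within S)"
    and \<gamma>: "(\<gamma> has_real_derivative \<gamma>') (at t within S)"
    and \<epsilon>: "(\<epsilon> has_real_derivative \<epsilon>') (at t within S)"
  shows "((\<lambda>s. \<beta> s * w (\<beta> s * x + \<epsilon> s) (\<gamma> s)) has_real_derivative
            \<beta> t * ((\<beta>' * x + \<epsilon>') * A + \<gamma>' * B) + \<beta>' * w (\<beta> t * x + \<epsilon> t) (\<gamma> t))
          (at t within S)"
proof -
  have "((\<lambda>s. \<beta> s * x + \<epsilon> s) has_real_derivative \<beta>' * x + \<epsilon>') (at t within S)"
    using \<beta> \<epsilon> by (auto intro!: derivative_eq_intros)
  from DERIV_mult'[OF \<beta> has_real_derivative_compose_partials[OF w this \<gamma>]]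
  show ?thesis .
qed

theorem theorem5:
  fixes I :: "real set"
    and a c g \<beta> \<gamma> \<epsilon> :: "real \<Rightarrow> real"
    and b1 b2 c1 c2 :: real
    and u v ux vx uxx vxx ut vt :: "real \<Rightarrow> real \<Rightarrow> real"
  assumes I: "is_interval I"
    and beta: "\<And>t. t \<in> I \<Longrightarrow> (\<beta> has_real_derivative (c t * \<beta> t)) (at t within I)"
    and gamma: "\<And>t. t \<in> I \<Longrightarrow> (\<gamma> has_real_derivative (a t * (\<beta> t)\<^sup>2)) (at t within I)"
    and eps: "\<And>t. t \<in> I \<Longrightarrow> (\<epsilon> has_real_derivative (- g t * \<beta> t)) (at t within I)"
    and u_diff: "\<And>\<xi> \<tau>. ((\<lambda>p. u (fst p) (snd p)) has_derivative
                    (\<lambda>h. fst h * ux \<xi> \<tau> + snd h * ut \<xi> \<tau>)) (at (\<xi>, \<tau>))"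
    and v_diff: "\<And>\<xi> \<tau>. ((\<lambda>p. v (fst p) (snd p)) has_derivative
                    (\<lambda>h. fst h * vx \<xi> \<tau> + snd h * vt \<xi> \<tau>)) (at (\<xi>, \<tau>))"
    and ux_diff: "\<And>\<xi> \<tau>. ((\<lambda>s. ux s \<tau>) has_real_derivative uxx \<xi> \<tau>) (at \<xi>)"
    and vx_diff: "\<And>\<xi> \<tau>. ((\<lambda>s. vx s \<tau>) has_real_derivative vxx \<xi> \<tau>) (at \<xi>)"
    and u_eq: "\<And>\<xi> \<tau>. ut \<xi> \<tau> = uxx \<xi> \<tau> - b1 * u \<xi> \<tau> * ux \<xi> \<tau>
                   - c1 * (ux \<xi> \<tau> * v \<xi> \<tau> + u \<xi> \<tau> * vx \<xi> \<tau>)"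
    and v_eq: "\<And>\<xi> \<tau>. vt \<xi> \<tau> = vxx \<xi> \<tau> - b2 * v \<xi> \<tau> * vx \<xi> \<tau>
                   - c2 * (ux \<xi> \<tau> * v \<xi> \<tau> + u \<xi> \<tau> * vx \<xi> \<tau>)"
  defines "\<psi> \<equiv> (\<lambda>x t. \<beta> t * u (\<beta> t * x + \<epsilon> t) (\<gamma> t))"
    and "\<phi> \<equiv> (\<lambda>x t. \<beta> t * v (\<beta> t * x + \<epsilon> t) (\<gamma> t))"
  shows "\<exists>\<psi>x \<psi>xx \<psi>t \<phi>x \<phi>xx \<phi>t :: real \<Rightarrow> real \<Rightarrow> real.
     \<forall>t\<in>I. \<forall>x.
       ((\<lambda>y. \<psi> y t) has_real_derivative \<psi>x x t) (at x) \<and>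
       ((\<lambda>y. \<psi>x y t) has_real_derivative \<psi>xx x t) (at x) \<and>
       ((\<lambda>s. \<psi> x s) has_real_derivative \<psi>t x t) (at t within I) \<and>
       ((\<lambda>y. \<phi> y t) has_real_derivative \<phi>x x t) (at x) \<and>
       ((\<lambda>y. \<phi>x y t) has_real_derivative \<phi>xx x t) (at x) \<and>
       ((\<lambda>s. \<phi> x s) has_real_derivative \<phi>t x t) (at t within I) \<and>
       \<psi>t x t = a t * \<psi>xx x t - b1 * a t * \<psi> x t * \<psi>x x t
                 - c1 * a t * (\<psi>x x t * \<phi> x t + \<psi> x t * \<phi>x x t)
                 + c t * (\<psi> x t + x * \<psi>x x t) - g t * \<psi>x x t \<and>
       \<phi>t x t = a t * \<phi>xx x t - b2 * a t * \<phi> x t * \<phi>x x t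
                 - c2 * a t * (\<psi>x x t * \<phi> x t + \<psi> x t * \<phi>x x t)
                 + c t * (\<phi> x t + x * \<phi>x x t) - g t * \<phi>x x t"
proof -
  define \<psi>x where "\<psi>x x t = \<beta> t * \<beta> t * ux (\<beta> t * x + \<epsilon> t) (\<gamma> t)" for x t
  define \<phi>x where "\<phi>x x t = \<beta> t * \<beta> t * vx (\<beta> t * x + \<epsilon> t) (\<gamma> t)" for x t
  define \<psi>xx where "\<psi>xx x t = \<beta> t * \<beta> t * \<beta> t * uxx (\<beta> t * x + \<epsilon> t) (\<gamma> t)" for x t
  define \<phi>xx where "\<phi>xx x t = \<beta> t * \<beta> t * \<beta> t * vxx (\<beta> t * x + \<epsilon> t) (\<gamma> t)" for x t
  define \<psi>t where "\<psi>t x t =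
      \<beta> t * ((c t * \<beta> t * x + - g t * \<beta> t) * ux (\<beta> t * x + \<epsilon> t) (\<gamma> t)
               + a t * (\<beta> t)\<^sup>2 * ut (\<beta> t * x + \<epsilon> t) (\<gamma> t))
      + c t * \<beta> t * u (\<beta> t * x + \<epsilon> t) (\<gamma> t)" for x t
  define \<phi>t where "\<phi>t x t =
      \<beta> t * ((c t * \<beta> t * x + - g t * \<beta> t) * vx (\<beta> t * x + \<epsilon> t) (\<gamma> t)
               + a t * (\<beta> t)\<^sup>2 * vt (\<beta> t * x + \<epsilon> t) (\<gamma> t))
      + c t * \<beta> t * v (\<beta> t * x + \<epsilon> t) (\<gamma> t)" for x t
  show ?thesis
  proof (rule exI[of _ \<psi>x], rule exI[of _ \<psi>xx], rule exI[of _ \<psi>t],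
         rule exI[of _ \<phi>x], rule exI[of _ \<phi>xx], rule exI[of _ \<phi>t], intro ballI allI conjI)
    fix t x assume t: "t \<in> I"
    note time_derivative = scaled_profile_derivative_time[OF _ beta[OF t] gamma[OF t] eps[OF t]]
    show "((\<lambda>y. \<psi> y t) has_real_derivative \<psi>x x t) (at x)"
      unfolding \<psi>_def \<psi>x_def
      by (rule has_real_derivative_scaled_affine_comp[OF has_derivative_partial_fst[OF u_diff]])
    show "((\<lambda>y. \<phi> y t) has_real_derivative \<phi>x x t) (at x)"
      unfolding \<phi>_def \<phi>x_def
      by (rule has_real_derivative_scaled_affine_comp[OF has_derivative_partial_fst[OF v_diff]])
    show "((\<lambda>y. \<psi>x y t) has_real_derivative \<psi>xx x t) (at x)"
      unfolding \<psi>x_def \<psi>xx_def by (rule has_real_derivative_scaled_affine_comp[OF ux_diff])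
    show "((\<lambda>y. \<phi>x y t) has_real_derivative \<phi>xx x t) (at x)"
      unfolding \<phi>x_def \<phi>xx_def by (rule has_real_derivative_scaled_affine_comp[OF vx_diff])
    show "((\<lambda>s. \<psi> x s) has_real_derivative \<psi>t x t) (at t within I)"
      unfolding \<psi>_def \<psi>t_def by (rule time_derivative[OF u_diff])
    show "((\<lambda>s. \<phi> x s) has_real_derivative \<phi>t x t) (at t within I)"
      unfolding \<phi>_def \<phi>t_def by (rule time_derivative[OF v_diff])
  qed (auto simp: \<psi>_def \<phi>_def \<psi>x_def \<phi>x_def \<psi>xx_def \<phi>xx_def \<psi>t_def \<phi>t_def u_eq v_eq
                  algebra_simps power2_eq_square)
qed

end
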